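(* Let $G,G'$ be locally compact Hausdorff groupoids, $G$ metrizable with metric $d_{G}$ for which inversion is an isometry and $r,s$ are contractions, and let $\pi:G\to G'$ be a continuous, proper groupoid morphism such that for every unit $u\in G^0$, $\pi|_{G^{u}}:G^{u}\to (G')^{\pi(u)}$ is a homeomorphism. Suppose a sequence $x_{k}'$ converges to $x'$ in $G'$. Then $\lim_{k}\mathrm{diam}_{G}(\pi^{-1}\{x_{k}'\})=0$ if and only if $\lim_{k}\mathrm{diam}_{G}(\pi^{-1}\{r(x_{k}')\})=0$.
   Context: $G^{u}=r^{-1}\{u\}$. For a compact $E\subseteq G$, $\mathrm{diam}_{G}(E)=\sup\{d_G(x,y):x,y\in E\}$. *)

theory Defs
  imports "HOL-Analysis.Analysis"
begin

text \<open>A groupoid (Renault's definition): a carrier set G, a set C of composable pairs,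
  a partial multiplication m (meaningful on C) and an inversion i.\<close>
definition groupoid :: "'a set \<Rightarrow> ('a \<times> 'a) set \<Rightarrow> ('a \<Rightarrow> 'a \<Rightarrow> 'a) \<Rightarrow> ('a \<Rightarrow> 'a) \<Rightarrow> bool" where
  "groupoid G C m i \<longleftrightarrow>
     C \<subseteq> G \<times> G \<and>
     (\<forall>(x,y)\<in>C. m x y \<in> G) \<and>
     (\<forall>x\<in>G. i x \<in> G \<and> i (i x) = x) \<and>
     (\<forall>x\<in>G. (x, i x) \<in> C \<and> (i x, x) \<in> C) \<and>
     (\<forall>x y z. (x,y) \<in> C \<and> (y,z) \<in> C \<longrightarrow>
        (m x y, z) \<in> C \<and> (x, m y z) \<in> C \<and> m (m x y) z = m x (m y z)) \<and>
     (\<forall>x y. (x,y) \<in> C \<longrightarrow> m (i x) (m x y) = y \<and> m (m x y) (i y) = x)"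

definition grng :: "('a \<Rightarrow> 'a \<Rightarrow> 'a) \<Rightarrow> ('a \<Rightarrow> 'a) \<Rightarrow> 'a \<Rightarrow> 'a" where
  "grng m i x = m x (i x)"

definition gsrc :: "('a \<Rightarrow> 'a \<Rightarrow> 'a) \<Rightarrow> ('a \<Rightarrow> 'a) \<Rightarrow> 'a \<Rightarrow> 'a" where
  "gsrc m i x = m (i x) x"

definition gunits :: "'a set \<Rightarrow> ('a \<Rightarrow> 'a \<Rightarrow> 'a) \<Rightarrow> ('a \<Rightarrow> 'a) \<Rightarrow> 'a set" where
  "gunits G m i = grng m i ` G"

definition rfiber :: "'a set \<Rightarrow> ('a \<Rightarrow> 'a \<Rightarrow> 'a) \<Rightarrow> ('a \<Rightarrow> 'a) \<Rightarrow> 'a \<Rightarrow> 'a set" where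
  "rfiber G m i u = {x \<in> G. grng m i x = u}"

text \<open>Topological groupoid, locally compact Hausdorff (Hausdorffness comes from the
  ambient type class); topology on G is the subspace topology.\<close>
definition lch_groupoid :: "('a::t2_space) set \<Rightarrow> ('a \<times> 'a) set \<Rightarrow> ('a \<Rightarrow> 'a \<Rightarrow> 'a) \<Rightarrow> ('a \<Rightarrow> 'a) \<Rightarrow> bool" where
  "lch_groupoid G C m i \<longleftrightarrow>
     groupoid G C m i \<and>
     continuous_on C (\<lambda>p. m (fst p) (snd p)) \<and>
     continuous_on G i \<and>
     locally_compact_space (top_of_set G)"

definition groupoid_morphism ::
  "'a set \<Rightarrow> ('a \<times> 'a) set \<Rightarrow> ('a \<Rightarrow> 'a \<Rightarrow> 'a) \<Rightarrow>
   'b set \<Rightarrow> ('b \<times> 'b) set \<Rightarrow> ('b \<Rightarrow> 'b \<Rightarrow> 'b) \<Rightarrow> ('a \<Rightarrow> 'b) \<Rightarrow> bool" where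
  "groupoid_morphism G C m G' C' m' \<pi> \<longleftrightarrow>
     (\<forall>x\<in>G. \<pi> x \<in> G') \<and>
     (\<forall>(x,y)\<in>C. (\<pi> x, \<pi> y) \<in> C' \<and> \<pi> (m x y) = m' (\<pi> x) (\<pi> y))"

definition proper_on :: "'a::topological_space set \<Rightarrow> 'b::topological_space set \<Rightarrow> ('a \<Rightarrow> 'b) \<Rightarrow> bool" where
  "proper_on G G' \<pi> \<longleftrightarrow> (\<forall>K. K \<subseteq> G' \<and> compact K \<longrightarrow> compact (G \<inter> \<pi> -` K))"

end

theory Submission
  imports Defs
begin

(* The range map r is a contraction, and since \<pi> is bijective on range fibres, r maps the fibre
   \<pi>^{-1}{x'_k} onto \<pi>^{-1}{r'(x'_k)}; hence the diameters of the latter are dominated by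
   those of the former. Conversely, all these fibres lie in the compact set
   K = \<pi>^{-1}({x'} \<union> {x'_k | k}), on which x \<mapsto> (\<pi> x, r x) is injective. By compactness, two
   points of K with the same image under \<pi> and nearby ranges are themselves close, so small
   diameters of the r-images force small diameters of the fibres. *)

lemma grng_in_carrier:
  assumes "groupoid G C m i" "x \<in> G"
  shows "grng m i x \<in> G"
  using assms unfolding groupoid_def grng_def by fast

lemma grng_left_identity:
  assumes "groupoid G C m i" "x \<in> G"
  shows "(grng m i x, x) \<in> C" "m (grng m i x) x = x"
proof -
  have "(x, i x) \<in> C" "(i x, x) \<in> C" "i (i x) = x"
    using assms unfolding groupoid_def by auto
  then show "(grng m i x, x) \<in> C" "m (grng m i x) x = x"
    using assms(1) unfolding groupoid_def grng_def by metis+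
qed

lemma grng_grng:
  assumes "groupoid G C m i" "x \<in> G"
  shows "grng m i (grng m i x) = grng m i x"
proof -
  define e where "e = grng m i x"
  have "(e, x) \<in> C" "m e x = x" "(x, i x) \<in> C"
    using grng_left_identity[OF assms] assms unfolding e_def groupoid_def by auto
  then have "(e, e) \<in> C" "m e e = e"
    using assms(1) unfolding groupoid_def grng_def e_def by metis+
  then show ?thesis
    using assms(1) unfolding groupoid_def grng_def e_def by metis
qed

lemma groupoid_morphism_grng:
  assumes "groupoid G C m i" "groupoid G' C' m' i'"
    and "groupoid_morphism G C m G' C' m' \<pi>" "x \<in> G"
  shows "\<pi> (grng m i x) = grng m' i' (\<pi> x)"
proof -
  have "(\<pi> (grng m i x), \<pi> x) \<in> C'" "m' (\<pi> (grng m i x)) (\<pi> x) = \<pi> x"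
    using grng_left_identity[OF assms(1,4)] assms(3) unfolding groupoid_morphism_def by auto
  then show ?thesis
    using assms(2) unfolding groupoid_def grng_def by metis
qed

lemma inj_on_morphism_grng:
  assumes "groupoid G C m i"
    and "\<forall>u\<in>gunits G m i. inj_on \<pi> (rfiber G m i u)"
  shows "inj_on (\<lambda>x. (\<pi> x, grng m i x)) G"
proof (rule inj_onI)
  fix x y assume "x \<in> G" "y \<in> G" and eq: "(\<pi> x, grng m i x) = (\<pi> y, grng m i y)"
  then have "x \<in> rfiber G m i (grng m i x)" "y \<in> rfiber G m i (grng m i x)"
    unfolding rfiber_def by auto
  moreover have "inj_on \<pi> (rfiber G m i (grng m i x))"
    using assms(2) \<open>x \<in> G\<close> unfolding gunits_def by blast
  ultimately show "x = y"
    using eq by (auto dest: inj_onD)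
qed

lemma grng_image_morphism_fibre:
  assumes G: "groupoid G C m i" and G': "groupoid G' C' m' i'"
    and \<pi>: "groupoid_morphism G C m G' C' m' \<pi>"
    and fibres: "\<forall>u\<in>gunits G m i. bij_betw \<pi> (rfiber G m i u) (rfiber G' m' i' (\<pi> u))"
    and "y \<in> G'"
  shows "grng m i ` (G \<inter> \<pi> -` {y}) = G \<inter> \<pi> -` {grng m' i' y}"
proof
  show "grng m i ` (G \<inter> \<pi> -` {y}) \<subseteq> G \<inter> \<pi> -` {grng m' i' y}"
    using grng_in_carrier[OF G] groupoid_morphism_grng[OF G G' \<pi>] by auto
next
  show "G \<inter> \<pi> -` {grng m' i' y} \<subseteq> grng m i ` (G \<inter> \<pi> -` {y})"
  proof
    fix z assume z: "z \<in> G \<inter> \<pi> -` {grng m' i' y}"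
    define u where "u = grng m i z"
    have u: "u \<in> gunits G m i" "u \<in> G" "grng m i u = u"
      using z grng_in_carrier[OF G] grng_grng[OF G] unfolding u_def gunits_def by auto
    have "\<pi> u = grng m' i' y"
      using z groupoid_morphism_grng[OF G G' \<pi>] grng_grng[OF G' \<open>y \<in> G'\<close>] unfolding u_def by auto
    have bij: "bij_betw \<pi> (rfiber G m i u) (rfiber G' m' i' (\<pi> u))"
      using fibres u(1) by blast
    \<comment> \<open>z is a unit: z and u = r(z) lie in the same range fibre and have the same image.\<close>
    have "z \<in> rfiber G m i u" "u \<in> rfiber G m i u"
      using z u unfolding rfiber_def u_def by auto
    then have "z = u"
      using inj_onD[OF bij_betw_imp_inj_on[OF bij]] z \<open>\<pi> u = grng m' i' y\<close> by auto
    moreover have "y \<in> rfiber G' m' i' (\<pi> u)"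
      using \<open>y \<in> G'\<close> \<open>\<pi> u = grng m' i' y\<close> unfolding rfiber_def by auto
    then obtain x where "x \<in> rfiber G m i u" "\<pi> x = y"
      using bij_betw_imp_surj_on[OF bij] by (metis imageE)
    ultimately show "z \<in> grng m i ` (G \<inter> \<pi> -` {y})"
      unfolding rfiber_def by auto
  qed
qed

lemma compact_insert_range_limit:
  fixes f :: "nat \<Rightarrow> 'a::topological_space"
  assumes "f \<longlonglongrightarrow> l"
  shows "compact (insert l (range f))"
  using compactin_sequence_with_limit[of euclidean f l "range f"] assms by simp

lemma dist_lipschitz_image_le_diameter:
  assumes "L-lipschitz_on S f" "bounded S" "x \<in> S" "y \<in> S"
  shows "dist (f x) (f y) \<le> L * diameter S"
  using lipschitz_onD[OF assms(1,3,4)] diameter_bounded_bound[OF assms(2-4)]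
    lipschitz_on_nonneg[OF assms(1)] by (meson mult_left_mono order_trans)

lemma bounded_lipschitz_image:
  assumes "L-lipschitz_on S f" "bounded S"
  shows "bounded (f ` S)"
  using dist_lipschitz_image_le_diameter[OF assms] unfolding bounded_two_points by blast

lemma diameter_lipschitz_image_le:
  assumes "L-lipschitz_on S f" "bounded S"
  shows "diameter (f ` S) \<le> L * diameter S"
proof (cases "S = {}")
  case False
  then show ?thesis
    using dist_lipschitz_image_le_diameter[OF assms] unfolding diameter_def
    by (auto intro!: cSUP_least)
qed (use lipschitz_on_nonneg[OF assms(1)] in simp)

lemma diameter_lipschitz_image_tendsto_0:
  assumes "L-lipschitz_on S f" "\<And>k. F k \<subseteq> S" "\<And>k. bounded (F k)"
    and "(\<lambda>k. diameter (F k)) \<longlonglongrightarrow> 0"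
  shows "(\<lambda>k. diameter (f ` F k)) \<longlonglongrightarrow> 0"
proof (rule real_tendsto_sandwich[OF _ _ tendsto_const])
  have lip: "L-lipschitz_on (F k) f" for k
    using lipschitz_on_subset[OF assms(1,2)] .
  show "\<forall>\<^sub>F k in sequentially. 0 \<le> diameter (f ` F k)"
    using diameter_ge_0[OF bounded_lipschitz_image[OF lip assms(3)]] by simp
  show "\<forall>\<^sub>F k in sequentially. diameter (f ` F k) \<le> L * diameter (F k)"
    using diameter_lipschitz_image_le[OF lip assms(3)] by simp
  show "(\<lambda>k. L * diameter (F k)) \<longlonglongrightarrow> 0"
    using tendsto_mult_right_zero[OF assms(4)] .
qed

lemma homeomorphism_imp_bij_betw:
  assumes "homeomorphism S T f g"
  shows "bij_betw f S T"
  using assms unfolding homeomorphism_def bij_betw_def by (metis inj_on_inverseI)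

lemma Hausdorff_space_euclidean_t2: "Hausdorff_space (euclidean :: 'a::t2_space topology)"
  using hausdorff by (fastforce simp: Hausdorff_space_def disjnt_def)

lemma compact_fibre_product:
  fixes f :: "'a::topological_space \<Rightarrow> 'b::t2_space"
  assumes K: "compact K" and f: "continuous_on K f"
  shows "compact {p \<in> K \<times> K. f (fst p) = f (snd p)}"
proof -
  have "continuous_on (K \<times> K) (\<lambda>p. f (fst p))" "continuous_on (K \<times> K) (\<lambda>p. f (snd p))"
    by (auto intro!: continuous_on_compose2[OF f] continuous_on_fst continuous_on_snd continuous_on_id)
  then have "closedin (top_of_set (K \<times> K)) {p \<in> K \<times> K. f (fst p) = f (snd p)}"
    using closedin_continuous_maps_eq[OF Hausdorff_space_euclidean_t2, of "top_of_set (K \<times> K)"]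
    by simp
  then show ?thesis
    using closedin_compact compact_Times[OF K K] by blast
qed

lemma compact_continuous_pos_bounded_below:
  fixes \<phi> :: "'a::topological_space \<Rightarrow> real"
  assumes "compact E" "continuous_on E \<phi>" "\<And>p. p \<in> E \<Longrightarrow> \<phi> p > 0"
  obtains \<delta> where "\<delta> > 0" "\<And>p. p \<in> E \<Longrightarrow> \<delta> \<le> \<phi> p"
proof (cases "E = {}")
  case False
  then obtain p where "p \<in> E" "\<And>q. q \<in> E \<Longrightarrow> \<phi> p \<le> \<phi> q"
    using continuous_attains_inf[OF assms(1) False assms(2)] by blast
  then show ?thesis
    using that assms(3) by blast
qed (use that[of 1] in simp)

lemma compact_injective_pair_separation:
  fixes f :: "'a::metric_space \<Rightarrow> 'b::t2_space" and g :: "'a \<Rightarrow> 'c::metric_space"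
  assumes K: "compact K" and f: "continuous_on K f" and g: "continuous_on K g"
    and inj: "inj_on (\<lambda>x. (f x, g x)) K" and "\<epsilon> > 0"
  obtains \<delta> where "\<delta> > 0"
    "\<And>x y. x \<in> K \<Longrightarrow> y \<in> K \<Longrightarrow> f x = f y \<Longrightarrow> dist (g x) (g y) < \<delta> \<Longrightarrow> dist x y < \<epsilon>"
proof -
  define E where "E = {p \<in> K \<times> K. f (fst p) = f (snd p)} \<inter> {p. \<epsilon> \<le> dist (fst p) (snd p)}"
  have "closed {p. \<epsilon> \<le> dist (fst p) (snd p)}"
    by (intro closed_Collect_le continuous_on_const continuous_on_dist continuous_on_fst
        continuous_on_snd continuous_on_id)
  then have "compact E"
    unfolding E_def by (rule compact_Int_closed[OF compact_fibre_product[OF K f]])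
  have "continuous_on E (\<lambda>p. g (fst p))" "continuous_on E (\<lambda>p. g (snd p))"
    unfolding E_def
    by (auto intro!: continuous_on_compose2[OF g] continuous_on_fst continuous_on_snd continuous_on_id)
  then have "continuous_on E (\<lambda>p. dist (g (fst p)) (g (snd p)))"
    by (rule continuous_on_dist)
  moreover have "dist (g (fst p)) (g (snd p)) > 0" if "p \<in> E" for p
    using that \<open>\<epsilon> > 0\<close> inj_onD[OF inj] unfolding E_def by fastforce
  ultimately obtain \<delta> where "\<delta> > 0" "\<And>p. p \<in> E \<Longrightarrow> \<delta> \<le> dist (g (fst p)) (g (snd p))"
    using compact_continuous_pos_bounded_below[OF \<open>compact E\<close>] by blast
  moreover have "(x, y) \<in> E" if "x \<in> K" "y \<in> K" "f x = f y" "\<not> dist x y < \<epsilon>" for x y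
    using that unfolding E_def by auto
  ultimately show ?thesis
    using that by fastforce
qed

lemma diameter_tendsto_0_of_image:
  fixes f :: "'a::metric_space \<Rightarrow> 'b::t2_space" and g :: "'a \<Rightarrow> 'c::metric_space"
  assumes K: "compact K" "continuous_on K f" "continuous_on K g" "inj_on (\<lambda>x. (f x, g x)) K"
    and F: "\<And>k. F k \<subseteq> K" and f_const: "\<And>k x y. x \<in> F k \<Longrightarrow> y \<in> F k \<Longrightarrow> f x = f y"
    and lim: "(\<lambda>k. diameter (g ` F k)) \<longlonglongrightarrow> 0"
  shows "(\<lambda>k. diameter (F k)) \<longlonglongrightarrow> 0"
proof -
  have bounded: "bounded (F k)" "bounded (g ` F k)" for k
    using F compact_imp_bounded[OF K(1)] compact_imp_bounded[OF compact_continuous_image[OF K(3,1)]]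
    by (auto intro: bounded_subset)
  show ?thesis
  proof (rule order_tendstoI)
    fix a :: real assume "a < 0"
    then show "\<forall>\<^sub>F k in sequentially. a < diameter (F k)"
      using diameter_ge_0[OF bounded(1)] by (intro always_eventually allI) (meson less_le_trans)
  next
    fix \<epsilon> :: real assume "0 < \<epsilon>"
    then obtain \<delta> where "\<delta> > 0"
      and sep: "\<And>x y. x \<in> K \<Longrightarrow> y \<in> K \<Longrightarrow> f x = f y \<Longrightarrow> dist (g x) (g y) < \<delta> \<Longrightarrow> dist x y < \<epsilon>/2"
      using compact_injective_pair_separation[OF K, of "\<epsilon>/2"] by auto
    show "\<forall>\<^sub>F k in sequentially. diameter (F k) < \<epsilon>"
      using order_tendstoD(2)[OF lim \<open>\<delta> > 0\<close>]
    proof (rule eventually_mono)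
      fix k assume small: "diameter (g ` F k) < \<delta>"
      have "dist x y < \<epsilon>/2" if "x \<in> F k" "y \<in> F k" for x y
        using sep F f_const that diameter_bounded_bound[OF bounded(2)] small
        by (meson image_eqI le_less_trans subsetD)
      then show "diameter (F k) < \<epsilon>"
        using diameter_lower_bounded[OF bounded(1), of "\<epsilon>/2"] \<open>0 < \<epsilon>\<close> by force
    qed
  qed
qed

lemma diameter_tendsto_0_iff_lipschitz_image:
  fixes f :: "'a::metric_space \<Rightarrow> 'b::t2_space" and g :: "'a \<Rightarrow> 'c::metric_space"
  assumes K: "compact K" "continuous_on K f" "L-lipschitz_on K g" "inj_on (\<lambda>x. (f x, g x)) K"
    and F: "\<And>k. F k \<subseteq> K" and f_const: "\<And>k x y. x \<in> F k \<Longrightarrow> y \<in> F k \<Longrightarrow> f x = f y"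
  shows "(\<lambda>k. diameter (F k)) \<longlonglongrightarrow> 0 \<longleftrightarrow> (\<lambda>k. diameter (g ` F k)) \<longlonglongrightarrow> 0"
proof
  have "bounded (F k)" for k
    using bounded_subset[OF compact_imp_bounded[OF K(1)] F] .
  then show "(\<lambda>k. diameter (F k)) \<longlonglongrightarrow> 0 \<Longrightarrow> (\<lambda>k. diameter (g ` F k)) \<longlonglongrightarrow> 0"
    using diameter_lipschitz_image_tendsto_0[where F = F, OF K(3) F] by blast
  show "(\<lambda>k. diameter (g ` F k)) \<longlonglongrightarrow> 0 \<Longrightarrow> (\<lambda>k. diameter (F k)) \<longlonglongrightarrow> 0"
    using diameter_tendsto_0_of_image[where F = F, OF K(1,2) lipschitz_on_continuous_on[OF K(3)] K(4) F]
      f_const by blast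
qed

theorem lemma7p30:
  fixes G :: "'a::metric_space set" and C :: "('a \<times> 'a) set"
    and m :: "'a \<Rightarrow> 'a \<Rightarrow> 'a" and i :: "'a \<Rightarrow> 'a"
    and G' :: "'b::t2_space set" and C' :: "('b \<times> 'b) set"
    and m' :: "'b \<Rightarrow> 'b \<Rightarrow> 'b" and i' :: "'b \<Rightarrow> 'b"
    and \<pi> :: "'a \<Rightarrow> 'b" and xk :: "nat \<Rightarrow> 'b" and x' :: 'b
  assumes "lch_groupoid G C m i"
    and "lch_groupoid G' C' m' i'"
    and "\<forall>x\<in>G. \<forall>y\<in>G. dist (i x) (i y) = dist x y"
    and "\<forall>x\<in>G. \<forall>y\<in>G. dist (grng m i x) (grng m i y) \<le> dist x y"
    and "\<forall>x\<in>G. \<forall>y\<in>G. dist (gsrc m i x) (gsrc m i y) \<le> dist x y"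
    and "groupoid_morphism G C m G' C' m' \<pi>"
    and "continuous_on G \<pi>"
    and "proper_on G G' \<pi>"
    and "\<forall>u\<in>gunits G m i. \<exists>g. homeomorphism (rfiber G m i u) (rfiber G' m' i' (\<pi> u)) \<pi> g"
    and "\<forall>k. xk k \<in> G'" and "x' \<in> G'" and "xk \<longlonglongrightarrow> x'"
  shows "(\<lambda>k. diameter (G \<inter> \<pi> -` {xk k})) \<longlonglongrightarrow> 0 \<longleftrightarrow>
         (\<lambda>k. diameter (G \<inter> \<pi> -` {grng m' i' (xk k)})) \<longlonglongrightarrow> 0"
proof -
  have G: "groupoid G C m i" and G': "groupoid G' C' m' i'"
    using assms(1,2) unfolding lch_groupoid_def by auto
  define r where "r = grng m i"
  define F where "F k = G \<inter> \<pi> -` {xk k}" for k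
  define K where "K = G \<inter> \<pi> -` insert x' (range xk)"
  have fibres: "\<forall>u\<in>gunits G m i. bij_betw \<pi> (rfiber G m i u) (rfiber G' m' i' (\<pi> u))"
    using assms(9) homeomorphism_imp_bij_betw by blast
  have range_fibres: "G \<inter> \<pi> -` {grng m' i' (xk k)} = r ` F k" for k
    using grng_image_morphism_fibre[OF G G' assms(6) fibres] assms(10) unfolding r_def F_def by auto
  have "compact K"
    using assms(8,10,11) compact_insert_range_limit[OF assms(12)]
    unfolding proper_on_def K_def by (simp add: image_subset_iff)
  have "K \<subseteq> G" and F_K: "F k \<subseteq> K" for k
    unfolding F_def K_def by auto
  have r: "1-lipschitz_on K r"
    using assms(4) \<open>K \<subseteq> G\<close> unfolding r_def by (intro lipschitz_onI) auto
  have inj: "inj_on (\<lambda>x. (\<pi> x, r x)) K"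
    using inj_on_morphism_grng[OF G, of \<pi>] fibres \<open>K \<subseteq> G\<close>
    unfolding r_def by (meson bij_betw_imp_inj_on inj_on_subset)
  have "(\<lambda>k. diameter (F k)) \<longlonglongrightarrow> 0 \<longleftrightarrow> (\<lambda>k. diameter (r ` F k)) \<longlonglongrightarrow> 0"
    by (rule diameter_tendsto_0_iff_lipschitz_image[where F = F,
          OF \<open>compact K\<close> continuous_on_subset[OF assms(7) \<open>K \<subseteq> G\<close>] r inj F_K])
      (simp add: F_def)
  then show ?thesis
    unfolding range_fibres F_def .
qed

end
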